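(* Let $n\ge2$, let $a_1,\dots,a_{n+1}\in\mathbb P^n$ be general points, and let $R\subset\mathbb P^n$ be a hyperplane containing none of them. Let $B=\{\langle a_i,a_j\rangle\cap R : 1\le i<j\le n+1\}$, a set of $\binom{n+1}{2}$ points of $R\cong\mathbb P^{n-1}$. Then $B$ imposes independent conditions on quadrics of $R$; equivalently, no quadric hypersurface of $R$ contains $B$.
   Context: $\langle a_i,a_j\rangle$ denotes the line spanned by $a_i$ and $a_j$. *)

theory Defs
  imports "HOL-Analysis.Analysis"
begin

text \<open>Points of P^n are represented by nonzero vectors of complex^'n,
  where CARD('n) = n+1 (homogeneous coordinates).\<close>

inductive_set polyfun :: "(('v \<Rightarrow> complex) \<Rightarrow> complex) set" where
  pf_const: "(\<lambda>x. c) \<in> polyfun"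
| pf_var: "(\<lambda>x. x v) \<in> polyfun"
| pf_add: "p \<in> polyfun \<Longrightarrow> q \<in> polyfun \<Longrightarrow> (\<lambda>x. p x + q x) \<in> polyfun"
| pf_mult: "p \<in> polyfun \<Longrightarrow> q \<in> polyfun \<Longrightarrow> (\<lambda>x. p x * q x) \<in> polyfun"

text \<open>A property holds for general (n+1)-tuples of points of P^n if it holds on a
  nonempty Zariski-open set of tuples, i.e. outside the zero locus of some polynomial
  in the coordinates which does not vanish identically.\<close>
definition general_tuples :: "(('i \<Rightarrow> complex ^ 'n) \<Rightarrow> bool) \<Rightarrow> bool" where
  "general_tuples P \<longleftrightarrow>
     (\<exists>f \<in> polyfun. (\<exists>x. f x \<noteq> 0) \<and>
        (\<forall>a. f (\<lambda>(i, k). a i $ k) \<noteq> 0 \<longrightarrow> P a))"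

definition linform :: "complex ^ 'n \<Rightarrow> complex ^ 'n \<Rightarrow> complex" where
  "linform c x = (\<Sum>k\<in>UNIV. c $ k * x $ k)"

definition hyperplane :: "complex ^ 'n \<Rightarrow> (complex ^ 'n) set" where
  "hyperplane c = {x. linform c x = 0}"

definition pline :: "complex ^ 'n \<Rightarrow> complex ^ 'n \<Rightarrow> (complex ^ 'n) set" where
  "pline a b = {(\<chi> k. s * a $ k + t * b $ k) | s t. True}"

definition qform :: "('n \<Rightarrow> 'n \<Rightarrow> complex) \<Rightarrow> complex ^ 'n \<Rightarrow> complex" where
  "qform Q x = (\<Sum>k\<in>UNIV. \<Sum>l\<in>UNIV. Q k l * x $ k * x $ l)"

end

theory Submission
  imports Defs
begin

text \<open>It suffices that the \<open>a\<^sub>i\<close> are linearly independent, which is the nonvanishing of a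
  determinant. Rescale them to \<open>v\<^sub>i\<close> with \<open>\<lambda>(v\<^sub>i) = 1\<close>, where \<open>\<lambda>\<close> is the linear form of \<open>R\<close>; then
  \<open>v\<^sub>i - v\<^sub>j\<close> spans \<open>\<langle>a\<^sub>i,a\<^sub>j\<rangle> \<inter> R\<close>, and a point \<open>x = \<Sum> u\<^sub>i v\<^sub>i\<close> lies on \<open>R\<close> iff \<open>\<Sum> u\<^sub>i = 0\<close>. If the
  bilinear form \<open>b\<close> of a quadric satisfies \<open>q(v\<^sub>i - v\<^sub>j) = 0\<close>, then
  \<open>b(v\<^sub>i,v\<^sub>j) + b(v\<^sub>j,v\<^sub>i) = b(v\<^sub>i,v\<^sub>i) + b(v\<^sub>j,v\<^sub>j)\<close>, and summing against \<open>u\<^sub>i u\<^sub>j\<close> gives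
  \<open>2 q(x) = 2 (\<Sum> u\<^sub>j)(\<Sum> u\<^sub>i b(v\<^sub>i,v\<^sub>i)) = 0\<close>: the quadric contains all of \<open>R\<close>.\<close>

lemma polyfun_sum:
  "finite S \<Longrightarrow> (\<And>s. s \<in> S \<Longrightarrow> f s \<in> polyfun) \<Longrightarrow> (\<lambda>x. \<Sum>s\<in>S. f s x) \<in> polyfun"
proof (induction S rule: finite_induct)
  case empty
  then show ?case using pf_const[of 0] by simp
next
  case (insert a F)
  then show ?case using pf_add[of "f a" "\<lambda>x. \<Sum>s\<in>F. f s x"] by simp
qed

lemma polyfun_prod:
  "finite S \<Longrightarrow> (\<And>s. s \<in> S \<Longrightarrow> f s \<in> polyfun) \<Longrightarrow> (\<lambda>x. \<Prod>s\<in>S. f s x) \<in> polyfun"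
proof (induction S rule: finite_induct)
  case empty
  then show ?case using pf_const[of 1] by simp
next
  case (insert a F)
  then show ?case using pf_mult[of "f a" "\<lambda>x. \<Prod>s\<in>F. f s x"] by simp
qed

lemma polyfun_det: "(\<lambda>X. det (\<chi> i k. X (i, k) :: complex ^ 'n::finite ^ 'n)) \<in> polyfun"
proof -
  have "(\<lambda>X. \<Sum>p\<in>{p. p permutes (UNIV :: 'n set)}.
            of_int (sign p) * (\<Prod>i\<in>UNIV. X (i, p i))) \<in> polyfun"
    by (intro polyfun_sum pf_mult[OF pf_const] polyfun_prod pf_var finite_permutations finite)
  then show ?thesis by (simp add: det_def)
qed

lemma general_tuples_if_det_nonzero:
  fixes P :: "('n::finite \<Rightarrow> complex ^ 'n) \<Rightarrow> bool"
  assumes "\<And>a. det (\<chi> i. a i) \<noteq> 0 \<Longrightarrow> P a"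
  shows "general_tuples P"
  unfolding general_tuples_def
proof (intro bexI[OF _ polyfun_det] conjI allI impI)
  have "(\<chi> i k. (\<lambda>(i, k). if i = k then 1 else 0) (i, k) :: complex ^ 'n ^ 'n) = mat 1"
    by (simp add: mat_def)
  then show "\<exists>X. det (\<chi> i k. X (i, k) :: complex ^ 'n ^ 'n) \<noteq> 0"
    by (metis det_I one_neq_zero)
qed (use assms in simp)

lemma rows_span_if_det_nonzero:
  fixes a :: "'n::finite \<Rightarrow> 'a::field ^ 'n"
  assumes "det (\<chi> i. a i) \<noteq> 0"
  obtains t where "x = (\<Sum>i\<in>UNIV. t i *s a i)"
proof -
  obtain B where B: "B ** (\<chi> i. a i) = mat 1"
    using assms invertible_det_nz invertible_left_inverse by blast
  have "(\<Sum>i\<in>UNIV. (x v* B) $ i *s a i) = (x v* B) v* (\<chi> i. a i)"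
    by (simp add: vec_eq_iff vector_matrix_mult_def)
  also have "\<dots> = x"
    by (simp add: vector_matrix_mul_assoc B)
  finally show ?thesis using that by metis
qed

lemma linform_sum_scaled:
  "linform c (\<Sum>i\<in>S. u i *s v i) = (\<Sum>i\<in>S. u i * linform c (v i))"
  unfolding linform_def
  by (simp add: sum_distrib_left mult.left_commute sum.swap[of _ S])

lemma linform_smult: "linform c (s *s x) = s * linform c x"
  by (simp add: linform_def sum_distrib_left mult.left_commute)

lemma linform_diff: "linform c (x - y) = linform c x - linform c y"
  by (simp add: linform_def right_diff_distrib sum_subtractf)

definition qbilin :: "('n::finite \<Rightarrow> 'n \<Rightarrow> complex) \<Rightarrow> complex ^ 'n \<Rightarrow> complex ^ 'n \<Rightarrow> complex" where
  "qbilin Q v w = (\<Sum>k\<in>UNIV. \<Sum>l\<in>UNIV. Q k l * v $ k * w $ l)"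

lemma qform_eq_qbilin: "qform Q v = qbilin Q v v"
  by (simp add: qform_def qbilin_def)

lemma qbilin_sum_left: "qbilin Q (\<Sum>i\<in>S. u i *s v i) w = (\<Sum>i\<in>S. u i * qbilin Q (v i) w)"
  unfolding qbilin_def
  by (simp add: sum_distrib_left sum_distrib_right mult_ac sum.swap[of _ S])

lemma qbilin_sum_right: "qbilin Q v (\<Sum>i\<in>S. u i *s w i) = (\<Sum>i\<in>S. u i * qbilin Q v (w i))"
  unfolding qbilin_def
  by (simp add: sum_distrib_left sum_distrib_right mult_ac sum.swap[of _ S])

lemma qform_sum_scaled:
  "qform Q (\<Sum>i\<in>S. u i *s v i) = (\<Sum>i\<in>S. \<Sum>j\<in>S. u i * u j * qbilin Q (v i) (v j))"
  unfolding qform_eq_qbilin qbilin_sum_left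
  unfolding qbilin_sum_right
  by (simp add: sum_distrib_left mult_ac)

lemma qform_diff:
  "qform Q (v - w) = qbilin Q v v - qbilin Q v w - qbilin Q w v + qbilin Q w w"
  unfolding qform_eq_qbilin qbilin_def
  by (simp add: algebra_simps sum_subtractf sum.distrib)

lemma quadratic_sum_eq_0_if_sum_eq_0:
  fixes u :: "'m \<Rightarrow> 'a::field_char_0"
  assumes "finite S" and sum_u: "(\<Sum>i\<in>S. u i) = 0"
    and \<beta>: "\<And>i j. \<beta> i j + \<beta> j i = \<beta> i i + \<beta> j j"
  shows "(\<Sum>i\<in>S. \<Sum>j\<in>S. u i * u j * \<beta> i j) = 0"
proof -
  let ?S = "\<Sum>i\<in>S. \<Sum>j\<in>S. u i * u j * \<beta> i j"
  have "?S + ?S = (\<Sum>i\<in>S. \<Sum>j\<in>S. u i * u j * (\<beta> i j + \<beta> j i))"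
    by (subst (2) sum.swap) (simp add: sum.distrib algebra_simps)
  also have "\<dots> = (\<Sum>i\<in>S. \<Sum>j\<in>S. u i * u j * (\<beta> i i + \<beta> j j))"
    by (simp only: \<beta>)
  also have "\<dots> = (\<Sum>i\<in>S. \<Sum>j\<in>S. u i * u j * \<beta> i i) + (\<Sum>j\<in>S. \<Sum>i\<in>S. u i * u j * \<beta> j j)"
    by (simp add: distrib_left sum.distrib sum.swap[of "\<lambda>i j. u i * u j * \<beta> j j"])
  also have "\<dots> = (\<Sum>i\<in>S. u i * \<beta> i i * (\<Sum>j\<in>S. u j)) + (\<Sum>j\<in>S. u j * \<beta> j j * (\<Sum>i\<in>S. u i))"
    by (simp add: sum_distrib_left sum_distrib_right mult_ac)
  finally have "?S + ?S = 0" by (simp add: sum_u)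
  then show ?thesis by simp
qed

lemma qform_eq_0_on_hyperplane:
  fixes v :: "'m::finite \<Rightarrow> complex ^ 'n::finite"
  assumes v: "\<And>i. linform c (v i) = 1"
    and Q: "\<And>i j. qform Q (v i - v j) = 0"
    and x: "linform c (\<Sum>i\<in>UNIV. u i *s v i) = 0"
  shows "qform Q (\<Sum>i\<in>UNIV. u i *s v i) = 0"
proof -
  have "(\<Sum>i\<in>UNIV. u i) = 0"
    using x by (simp add: linform_sum_scaled v)
  moreover have "qbilin Q (v i) (v j) + qbilin Q (v j) (v i) = qbilin Q (v i) (v i) + qbilin Q (v j) (v j)" for i j
    using Q[of i j] by (simp add: qform_diff algebra_simps)
  ultimately show ?thesis
    unfolding qform_sum_scaled by (intro quadratic_sum_eq_0_if_sum_eq_0) auto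
qed

lemma scaled_sum_in_pline: "s *s a + t *s b \<in> pline a b"
  unfolding pline_def by (auto simp: vec_eq_iff)

theorem lemma2:
  assumes "CARD('n::finite) \<ge> 3"
  shows "general_tuples (\<lambda>a :: 'n \<Rightarrow> complex ^ 'n.
           \<forall>c :: complex ^ 'n. c \<noteq> 0 \<longrightarrow> (\<forall>i. a i \<notin> hyperplane c) \<longrightarrow>
             \<not> (\<exists>Q. (\<exists>x \<in> hyperplane c. qform Q x \<noteq> 0) \<and>
                   (\<forall>i j. i \<noteq> j \<longrightarrow>
                      (\<forall>p \<in> pline (a i) (a j) \<inter> hyperplane c. qform Q p = 0))))"
proof (intro general_tuples_if_det_nonzero allI impI notI, elim exE conjE bexE)
  fix a :: "'n \<Rightarrow> complex ^ 'n" and c x Q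
  assume det: "det (\<chi> i. a i) \<noteq> 0" and notin: "\<forall>i. a i \<notin> hyperplane c"
    and x: "x \<in> hyperplane c" "qform Q x \<noteq> 0"
    and Q: "\<forall>i j. i \<noteq> j \<longrightarrow> (\<forall>p \<in> pline (a i) (a j) \<inter> hyperplane c. qform Q p = 0)"
  define v where "v i = (1 / linform c (a i)) *s a i" for i
  have nz: "linform c (a i) \<noteq> 0" for i
    using notin by (simp add: hyperplane_def)
  have v: "linform c (v i) = 1" for i
    using nz by (simp add: v_def linform_smult)
  have Qv: "qform Q (v i - v j) = 0" for i j
  proof (cases "i = j")
    case False
    have "v i - v j \<in> pline (a i) (a j)"
      using scaled_sum_in_pline[of "1 / linform c (a i)" "a i" "- (1 / linform c (a j))" "a j"]
      by (simp add: v_def vector_smult_lneg)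
    moreover have "v i - v j \<in> hyperplane c"
      by (simp add: hyperplane_def linform_diff v)
    ultimately show ?thesis using Q False by blast
  qed (simp add: qform_def)
  obtain t where "x = (\<Sum>i\<in>UNIV. t i *s a i)"
    using rows_span_if_det_nonzero[OF det] by blast
  also have "\<dots> = (\<Sum>i\<in>UNIV. (t i * linform c (a i)) *s v i)"
    using nz by (simp add: v_def vector_smult_assoc)
  finally have x_eq: "x = (\<Sum>i\<in>UNIV. (t i * linform c (a i)) *s v i)" .
  have "qform Q x = 0"
    using x(1) unfolding x_eq hyperplane_def by (intro qform_eq_0_on_hyperplane[OF v Qv]) simp
  with x(2) show False by simp
qed

end
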